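(* Let $B\in\mathbb{Z}^{n\times n}$ and $b\in\mathbb{Z}^n$. Define a relation on $\mathbb{Z}^n$ by $x\sim y$ if and only if there exists $z\in\mathbb{Z}^n$ with $x-y=Bz$ or $x+y+b=Bz$. Then $\sim$ is an equivalence relation and its number of equivalence classes is $$E(B,b)=\frac{|\det(B)|_\infty+O(B,b)}{2}.$$
   Context: $O(B,b)$ denotes the number of solutions $\bar x\in\mathbb{Z}_2^n$ of the linear system $\bar B\bar x=\bar b$ over $\mathbb{Z}_2=\mathbb{Z}/2\mathbb{Z}$, where the bar denotes reduction modulo $2$. For an integer $x$, $|x|_\infty=|x|$ if $x\neq 0$ and $|x|_\infty=\infty$ if $x=0$; arithmetic with $\infty$ follows $(\infty+k)/2=\infty$. *)

theory Defs
  imports "HOL-Analysis.Analysis" "HOL-Library.Z2"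
begin

definition mat_mod2 :: "int^'n^'m \<Rightarrow> bit^'n^'m" where
  "mat_mod2 B = (\<chi> i j. of_int (B $ i $ j))"

definition vec_mod2 :: "int^'n \<Rightarrow> bit^'n" where
  "vec_mod2 b = (\<chi> i. of_int (b $ i))"

definition O_count :: "int^'n^'n \<Rightarrow> int^'n \<Rightarrow> nat" where
  "O_count B b = card {x :: bit^'n. mat_mod2 B *v x = vec_mod2 b}"

definition sim_rel :: "int^'n^'n \<Rightarrow> int^'n \<Rightarrow> ((int^'n) \<times> (int^'n)) set" where
  "sim_rel B b = {(x, y). \<exists>z. x - y = B *v z \<or> x + y + b = B *v z}"

end

theory Submission
  imports Defs "HOL-Computational_Algebra.Primes"
begin

text \<open>
  Write L for the lattice B Z^n and r x = - x - b. Then x ~ y iff y is congruent modulo L to x or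
  to r x; since r is an involution compatible with L, the classes of ~ are the orbits of r on
  Z^n / L, hence 2 E(B,b) = |Z^n / L| + #(classes fixed by r).

  The index |Z^n / L| is |det B|. If |det B| > 1, dividing the columns of the adjugate by the gcd
  of their entries and applying Bezout yields a prime p and a vector u with u_i = 1 and
  B u = 0 modulo p; replacing column i of B by B u / p divides the determinant by p, and L is
  the sublattice of index p of the new lattice cut out by the condition p | v_i.

  The class of x is fixed iff 2 x + b = B z for some z, and reducing z modulo 2 gives a bijection
  from the fixed classes onto the solutions of the system modulo 2 (injective because B is).
  If det B = 0, a nonzero linear functional vanishing on L takes at most two values on each
  class among the multiples of a unit vector, so there are infinitely many classes.
\<close>

section \<open>Refining an equivalence relation\<close>

lemma card_refines_sum:
  assumes "R \<subseteq> S" "equiv A R" "equiv A S" "finite (A // S)"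
    and fibers: "\<And>Q. Q \<in> A // S \<Longrightarrow> finite {X \<in> A // R. S `` X = Q}"
    and "F \<subseteq> A // R"
  shows "finite F" and "card F = (\<Sum>Q\<in>A // S. card {X \<in> F. S `` X = Q})"
proof -
  have image: "(\<lambda>X. S `` X) ` (A // R) = A // S"
    using refines_equiv_image_eq[OF assms(1-3)] .
  then have "A // R = (\<Union>Q\<in>A // S. {X \<in> A // R. S `` X = Q})" by blast
  then show "finite F"
    using assms(4,6) fibers finite_subset by (metis (no_types, lifting) finite_UN_I)
  moreover have "(\<lambda>X. S `` X) ` F \<subseteq> A // S"
    using image assms(6) by blast
  ultimately have "(\<Sum>Q\<in>A // S. \<Sum>X\<in>{X \<in> F. S `` X = Q}. 1) = (\<Sum>X\<in>F. 1 :: nat)"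
    using assms(4) by (intro sum.group)
  then show "card F = (\<Sum>Q\<in>A // S. card {X \<in> F. S `` X = Q})" by simp
qed

lemma matrix_vector_mult_smult_right:
  fixes A :: "'a::comm_semiring_1^'n^'m"
  shows "A *v (c *s x) = c *s (A *v x)"
  by (simp add: vec_eq_iff matrix_vector_mult_def sum_distrib_left mult_ac)

lemma matrix_vector_mult_uminus_right:
  fixes A :: "'a::ring_1^'n^'m"
  shows "A *v (- x) = - (A *v x)"
  by (simp add: vec_eq_iff matrix_vector_mult_def sum_negf)

lemma matrix_vector_mult_axis_nth:
  fixes A :: "'a::comm_semiring_1^'n^'m"
  shows "(A *v axis i 1) $ r = A $ r $ i"
  by (simp add: matrix_vector_mult_def axis_def if_distrib cong: if_cong)

definition replace_col :: "'a^'n^'m \<Rightarrow> 'n \<Rightarrow> 'a^'m \<Rightarrow> 'a^'n^'m" where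
  "replace_col B i w = (\<chi> r c. if c = i then w $ r else B $ r $ c)"

lemma replace_col_nth [simp]: "replace_col B i w $ r $ c = (if c = i then w $ r else B $ r $ c)"
  by (simp add: replace_col_def)

lemma replace_col_mult:
  fixes B :: "'a::comm_ring_1^'n^'m"
  shows "replace_col B i w *v v = B *v (v - v $ i *s axis i 1) + v $ i *s w"
proof -
  have "(replace_col B i w *v v) $ r = (B *v (v - v $ i *s axis i 1) + v $ i *s w) $ r" for r
  proof -
    have "(replace_col B i w *v v) $ r
        = (\<Sum>c\<in>UNIV. B $ r $ c * (v - v $ i *s axis i 1) $ c + (if c = i then w $ r * v $ c else 0))"
      by (simp add: matrix_vector_mult_def axis_def) (intro sum.cong; simp)
    then show ?thesis
      by (simp add: sum.distrib matrix_vector_mult_def mult.commute)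
  qed
  then show ?thesis by (simp add: vec_eq_iff)
qed

definition real_mat :: "int^'n^'m \<Rightarrow> real^'n^'m" where
  "real_mat B = (\<chi> i j. of_int (B $ i $ j))"

definition real_vec :: "int^'n \<Rightarrow> real^'n" where
  "real_vec v = (\<chi> i. of_int (v $ i))"

lemma real_mat_mult_real_vec: "real_mat B *v real_vec z = real_vec (B *v z)"
  by (simp add: real_mat_def real_vec_def matrix_vector_mult_def vec_eq_iff)

lemma det_real_mat: "det (real_mat B) = of_int (det B)"
  by (simp add: det_def real_mat_def)

lemma real_vec_nth [simp]: "real_vec v $ i = of_int (v $ i)"
  by (simp add: real_vec_def)

lemma real_vec_inject [simp]: "real_vec x = real_vec y \<longleftrightarrow> x = y"
  by (simp add: real_vec_def vec_eq_iff)

lemma real_vec_smult: "real_vec (c *s x) = of_int c *s real_vec x"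
  by (simp add: real_vec_def vec_eq_iff)

lemma real_vec_diff: "real_vec (x - y) = real_vec x - real_vec y"
  by (simp add: vec_eq_iff)

lemma real_vec_uminus: "real_vec (- x) = - real_vec x"
  by (simp add: vec_eq_iff)

lemma real_mat_replace_col: "real_mat (replace_col B i w) = replace_col (real_mat B) i (real_vec w)"
  by (simp add: real_mat_def real_vec_def vec_eq_iff)

definition adjugate_mult :: "int^'n^'n \<Rightarrow> int^'n \<Rightarrow> int^'n" where
  "adjugate_mult B b = (\<chi> k. det (replace_col B k b))"

lemma real_cramer:
  fixes B :: "int^'n^'n"
  assumes "det B \<noteq> 0"
  shows "real_mat B *v x = real_vec b \<longleftrightarrow> of_int (det B) *s x = real_vec (adjugate_mult B b)"
proof -
  have minors: "det (replace_col (real_mat B) k (real_vec b)) = of_int (adjugate_mult B b $ k)" for k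
    by (simp add: adjugate_mult_def det_real_mat flip: real_mat_replace_col)
  have "det (real_mat B) \<noteq> 0"
    using assms by (simp add: det_real_mat)
  then have "real_mat B *v x = real_vec b \<longleftrightarrow>
      x = (\<chi> k. det (replace_col (real_mat B) k (real_vec b)) / det (real_mat B))"
    unfolding replace_col_def by (rule cramer)
  also have "\<dots> \<longleftrightarrow> of_int (det B) *s x = real_vec (adjugate_mult B b)"
    unfolding minors det_real_mat using assms by (auto simp: vec_eq_iff real_vec_def field_simps)
  finally show ?thesis .
qed

lemma matrix_adjugate_mult:
  fixes B :: "int^'n^'n"
  assumes "det B \<noteq> 0"
  shows "B *v adjugate_mult B b = det B *s b"
proof -
  let ?d = "real_of_int (det B)"
  define x where "x = inverse ?d *s real_vec (adjugate_mult B b)"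
  have "?d *s x = real_vec (adjugate_mult B b)"
    using assms by (simp add: x_def)
  moreover have "real_mat B *v x = real_vec b"
    using assms by (simp add: real_cramer x_def)
  then have "real_mat B *v (?d *s x) = ?d *s real_vec b"
    by (simp add: vector_scalar_commute)
  ultimately have "real_vec (B *v adjugate_mult B b) = real_vec (det B *s b)"
    by (simp add: real_vec_smult flip: real_mat_mult_real_vec)
  then show ?thesis by simp
qed

lemma matrix_vector_mult_inj:
  fixes B :: "int^'n^'n"
  assumes "det B \<noteq> 0" and "B *v v = B *v v'"
  shows "v = v'"
proof -
  have "real_mat B *v real_vec v = real_vec (B *v v')" "real_mat B *v real_vec v' = real_vec (B *v v')"
    using assms(2) by (simp_all add: real_mat_mult_real_vec)
  then have "of_int (det B) *s real_vec v = of_int (det B) *s real_vec v'"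
    using real_cramer[OF assms(1)] by simp
  then show ?thesis
    using assms(1) by (simp add: vec_eq_iff real_vec_def)
qed

lemma det_replace_col_mult:
  fixes B :: "int^'n^'n"
  shows "det (replace_col B k (B *v x)) = x $ k * det B"
proof -
  have "det (replace_col (real_mat B) k (real_mat B *v real_vec x)) = real_vec x $ k * det (real_mat B)"
    unfolding replace_col_def by (rule cramer_lemma)
  then have "real_of_int (det (replace_col B k (B *v x))) = real_of_int (x $ k * det B)"
    by (simp add: det_real_mat real_mat_mult_real_vec flip: real_mat_replace_col)
  then show ?thesis by (rule of_int_eq_iff[THEN iffD1])
qed

section \<open>The index of a full-rank lattice\<close>

definition lattice_cong :: "'a::ring_1^'n^'m \<Rightarrow> (('a^'m) \<times> ('a^'m)) set" where
  "lattice_cong B = {(x, y). \<exists>z. x - y = B *v z}"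

lemma equiv_lattice_cong: "equiv UNIV (lattice_cong B)"
proof (rule equivI)
  show "refl (lattice_cong B)"
    by (auto simp: refl_on_def lattice_cong_def intro: exI[of _ 0])
  show "sym (lattice_cong B)"
  proof (rule symI)
    fix x y assume "(x, y) \<in> lattice_cong B"
    then obtain z where "x - y = B *v z" by (auto simp: lattice_cong_def)
    then have "y - x = B *v (- z)"
      by (metis matrix_vector_mult_uminus_right minus_diff_eq)
    then show "(y, x) \<in> lattice_cong B" by (auto simp: lattice_cong_def)
  qed
  show "trans (lattice_cong B)"
  proof (rule transI)
    fix x y w assume "(x, y) \<in> lattice_cong B" "(y, w) \<in> lattice_cong B"
    then obtain z z' where "x - y = B *v z" "y - w = B *v z'" by (auto simp: lattice_cong_def)
    moreover have "x - w = (x - y) + (y - w)" by simp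
    ultimately have "x - w = B *v (z + z')"
      by (simp add: matrix_vector_right_distrib)
    then show "(x, w) \<in> lattice_cong B" by (auto simp: lattice_cong_def)
  qed
qed simp

lemma lattice_cong_sym: "(x, y) \<in> lattice_cong B \<Longrightarrow> (y, x) \<in> lattice_cong B"
  using equiv_lattice_cong[of B] by (auto simp: equiv_def dest: symD)

lemma lattice_cong_trans:
  "(x, y) \<in> lattice_cong B \<Longrightarrow> (y, w) \<in> lattice_cong B \<Longrightarrow> (x, w) \<in> lattice_cong B"
  using equiv_lattice_cong[of B] by (auto simp: equiv_def dest: transD)

lemma replace_col_mult_lift:
  fixes B :: "'a::comm_ring_1^'n^'m"
  assumes "u $ i = 1" and "p *s w = B *v u"
  shows "replace_col B i w *v (z - z $ i *s u + (p * z $ i) *s axis i 1) = B *v z"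
proof -
  let ?v = "z - z $ i *s u + (p * z $ i) *s axis i 1"
  have "?v $ i = p * z $ i"
    using assms(1) by (simp add: axis_def)
  then have "replace_col B i w *v ?v = B *v (z - z $ i *s u) + z $ i *s (p *s w)"
    by (simp add: replace_col_mult mult.commute)
  also have "\<dots> = B *v z"
    by (simp add: assms(2) matrix_vector_mult_diff_distrib matrix_vector_mult_smult_right)
  finally show ?thesis .
qed

lemma det_replace_col_div:
  fixes B :: "int^'n^'n"
  assumes "u $ i = 1" and "p *s w = B *v u"
  shows "det B = p * det (replace_col B i w)"
proof -
  let ?B' = "replace_col B i w" and ?e = "axis i 1 :: int^'n"
  have "?B' *v (?e - u + p *s ?e) = B *v ?e"
    using replace_col_mult_lift[OF assms, of ?e] by (simp add: axis_def)
  then have "B = replace_col ?B' i (?B' *v (?e - u + p *s ?e))"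
    by (simp add: vec_eq_iff matrix_vector_mult_axis_nth)
  then have "det B = (?e - u + p *s ?e) $ i * det ?B'"
    by (metis det_replace_col_mult)
  then show ?thesis using assms(1) by simp
qed

lemma lattice_cong_replace_col:
  fixes B :: "'a::comm_ring_1^'n^'m"
  assumes "u $ i = 1" and "p *s w = B *v u"
  shows "lattice_cong B = {(x, y). \<exists>v. x - y = replace_col B i w *v v \<and> p dvd v $ i}"
proof (intro set_eqI iffI; clarify)
  fix x y assume "(x, y) \<in> lattice_cong B"
  then obtain z where z: "x - y = B *v z" by (auto simp: lattice_cong_def)
  let ?v = "z - z $ i *s u + (p * z $ i) *s axis i 1"
  have "x - y = replace_col B i w *v ?v"
    using replace_col_mult_lift[OF assms] z by simp
  moreover have "p dvd ?v $ i"
    using assms(1) by (simp add: axis_def)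
  ultimately show "\<exists>v. x - y = replace_col B i w *v v \<and> p dvd v $ i" by blast
next
  fix x y v assume v: "x - y = replace_col B i w *v v" and "p dvd v $ i"
  then obtain a where a: "v $ i = p * a" by (elim dvdE)
  have "replace_col B i w *v v = B *v (v - v $ i *s axis i 1) + a *s (p *s w)"
    by (simp add: replace_col_mult a mult.commute)
  also have "\<dots> = B *v (v - v $ i *s axis i 1 + a *s u)"
    by (simp add: assms(2) matrix_vector_right_distrib matrix_vector_mult_smult_right)
  finally show "(x, y) \<in> lattice_cong B"
    using v by (auto simp: lattice_cong_def)
qed

lemma lattice_cong_subset_sublattice:
  assumes "lattice_cong B = {(x, y). \<exists>v. x - y = B' *v v \<and> p dvd v $ i}"
  shows "lattice_cong B \<subseteq> lattice_cong B'"
  using assms by (auto simp: lattice_cong_def)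

lemma sublattice_fiber:
  fixes B B' :: "int^'n^'n"
  assumes "p > 0"
    and sublattice: "lattice_cong B = {(x, y). \<exists>v. x - y = B' *v v \<and> p dvd v $ i}"
  shows "{X \<in> UNIV // lattice_cong B. lattice_cong B' `` X = lattice_cong B' `` {x}}
     = (\<lambda>t. lattice_cong B `` {x + B' *v (t *s axis i 1)}) ` {0..<p}"
  (is "?fiber = ?g ` _")
proof -
  have class_eq: "lattice_cong B' `` (lattice_cong B `` {y}) = lattice_cong B' `` {y}" for y
    using refines_equiv_class_eq2[OF lattice_cong_subset_sublattice[OF sublattice]
        equiv_lattice_cong equiv_lattice_cong] .
  show ?thesis
  proof (intro set_eqI iffI)
    fix X assume "X \<in> ?fiber"
    then obtain y where X: "X = lattice_cong B `` {y}"
      and "lattice_cong B' `` {y} = lattice_cong B' `` {x}"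
      by (auto simp: class_eq elim!: quotientE)
    then have "(x, y) \<in> lattice_cong B'"
      using eq_equiv_class_iff[OF equiv_lattice_cong] by blast
    then obtain v where v: "x - y = B' *v v" by (auto simp: lattice_cong_def)
    define t where "t = (- v $ i) mod p"
    have "x + B' *v (t *s axis i 1) - y = B' *v (v + t *s axis i 1)"
      by (simp add: matrix_vector_right_distrib flip: v)
    moreover have "p dvd (v + t *s axis i 1) $ i"
      by (simp add: t_def axis_def dvd_eq_mod_eq_0 mod_add_right_eq)
    ultimately have "(x + B' *v (t *s axis i 1), y) \<in> lattice_cong B"
      using sublattice by blast
    then have "X = ?g t"
      using X equiv_class_eq[OF equiv_lattice_cong] by metis
    moreover have "t \<in> {0..<p}" using assms(1) by (simp add: t_def)
    ultimately show "X \<in> ?g ` {0..<p}" by blast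
  next
    fix X assume "X \<in> ?g ` {0..<p}"
    then obtain t where X: "X = ?g t" by blast
    have "(x + B' *v (t *s axis i 1), x) \<in> lattice_cong B'"
      by (auto simp: lattice_cong_def)
    then have "lattice_cong B' `` X = lattice_cong B' `` {x}"
      using X class_eq equiv_class_eq[OF equiv_lattice_cong] by simp
    then show "X \<in> ?fiber"
      using X by (auto intro: quotientI)
  qed
qed

lemma inj_on_sublattice_shift:
  fixes B B' :: "int^'n^'n"
  assumes "det B' \<noteq> 0"
    and sublattice: "lattice_cong B = {(x, y). \<exists>v. x - y = B' *v v \<and> p dvd v $ i}"
  shows "inj_on (\<lambda>t. lattice_cong B `` {x + B' *v (t *s axis i 1)}) {0..<p}"
proof
  fix t s assume ts: "t \<in> {0..<p}" "s \<in> {0..<p}"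
    and "lattice_cong B `` {x + B' *v (t *s axis i 1)} = lattice_cong B `` {x + B' *v (s *s axis i 1)}"
  then have "(x + B' *v (t *s axis i 1), x + B' *v (s *s axis i 1)) \<in> lattice_cong B"
    using eq_equiv_class_iff[OF equiv_lattice_cong] by blast
  then obtain v where v: "x + B' *v (t *s axis i 1) - (x + B' *v (s *s axis i 1)) = B' *v v"
    and "p dvd v $ i"
    using sublattice by blast
  have "(t - s) *s axis i 1 = t *s axis i 1 - s *s axis i 1"
    by (simp add: vec_eq_iff algebra_simps)
  then have "B' *v ((t - s) *s axis i 1) = B' *v v"
    by (simp add: matrix_vector_mult_diff_distrib flip: v)
  then have "(t - s) *s axis i 1 = v"
    by (rule matrix_vector_mult_inj[OF assms(1)])
  then have "t mod p = s mod p"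
    using \<open>p dvd v $ i\<close> by (auto simp: mod_eq_dvd_iff)
  then show "t = s" using ts by simp
qed

lemma card_quotient_sublattice:
  fixes B B' :: "int^'n^'n"
  assumes "p > 0" "det B' \<noteq> 0" "finite (UNIV // lattice_cong B')"
    and sublattice: "lattice_cong B = {(x, y). \<exists>v. x - y = B' *v v \<and> p dvd v $ i}"
  shows "finite (UNIV // lattice_cong B)"
    and "card (UNIV // lattice_cong B) = nat p * card (UNIV // lattice_cong B')"
proof -
  let ?fiber = "\<lambda>Q. {X \<in> UNIV // lattice_cong B. lattice_cong B' `` X = Q}"
  have fiber: "finite (?fiber Q) \<and> card (?fiber Q) = nat p" if "Q \<in> UNIV // lattice_cong B'" for Q
    using that sublattice_fiber[OF assms(1) sublattice]
      card_image[OF inj_on_sublattice_shift[OF assms(2) sublattice]]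
    by (auto elim!: quotientE)
  note refines = card_refines_sum[OF lattice_cong_subset_sublattice[OF sublattice]
      equiv_lattice_cong equiv_lattice_cong assms(3) _ order_refl]
  show "finite (UNIV // lattice_cong B)"
    using refines(1) fiber by blast
  show "card (UNIV // lattice_cong B) = nat p * card (UNIV // lattice_cong B')"
    using refines(2) fiber by (simp add: mult.commute)
qed

lemma det_dvd_one_if_solves_scaled_axes:
  fixes B :: "'a::comm_ring_1^'n^'n"
  assumes "\<And>c. B *v a c = q *s axis c 1" and "q dvd 1"
  shows "det B dvd 1"
proof -
  obtain q' where q': "1 = q * q'" using assms(2) by (elim dvdE)
  define A where "A = (\<chi> r c. q' * a c $ r)"
  have "(B ** A) $ r $ c = q' * (B *v a c) $ r" for r c
    by (simp add: matrix_matrix_mult_def matrix_vector_mult_def A_def sum_distrib_left mult_ac)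
  then have "B ** A = mat 1"
    using q' by (simp add: vec_eq_iff assms(1) mat_def axis_def mult.commute)
  then have "1 = det B * det A" by (metis det_I det_mul)
  then show ?thesis by (rule dvdI)
qed

lemma exists_primitive_adjugate_columns:
  fixes B :: "int^'n^'n"
  assumes "det B \<noteq> 0"
  obtains q a where "q dvd det B" "\<And>c. B *v a c = q *s axis c 1"
    "\<And>p. prime p \<Longrightarrow> \<exists>c r. \<not> p dvd a c $ r"
proof -
  define a where "a c = adjugate_mult B (axis c 1)" for c
  have Ba: "B *v a c = det B *s axis c 1" for c
    using matrix_adjugate_mult[OF assms] by (simp add: a_def)
  define g where "g = Gcd {a c $ r | c r. True}"
  have g_dvd: "g dvd a c $ r" for c r
    unfolding g_def by (rule Gcd_dvd) blast
  obtain c0 :: 'n where True by blast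
  have "g dvd (B *v a c0) $ c0"
    by (simp add: matrix_vector_mult_def g_dvd dvd_sum)
  then obtain q where q: "det B = g * q"
    by (auto simp: Ba axis_def)
  then have "g \<noteq> 0" using assms by auto
  define a' where "a' c = (\<chi> r. a c $ r div g)" for c
  have ga': "g *s a' c = a c" for c
    using g_dvd by (simp add: a'_def vec_eq_iff)
  show thesis
  proof
    show "q dvd det B" using q by simp
    show "B *v a' c = q *s axis c 1" for c
    proof -
      have "g *s (B *v a' c) = g *s (q *s axis c 1)"
        using Ba[of c] by (simp add: ga' q flip: matrix_vector_mult_smult_right)
      then show ?thesis using \<open>g \<noteq> 0\<close> by (simp add: vec_eq_iff)
    qed
    show "\<exists>c r. \<not> p dvd a' c $ r" if "prime p" for p
    proof (rule ccontr)
      assume "\<not> (\<exists>c r. \<not> p dvd a' c $ r)"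
      then have "p * g dvd x" if "x \<in> {a c $ r | c r. True}" for x
        using that ga' by (auto simp: vec_eq_iff) (metis mult_dvd_mono dvd_refl mult.commute)
      then have "p * g dvd g" unfolding g_def by (rule Gcd_greatest)
      then have "p dvd 1" using \<open>g \<noteq> 0\<close> by (metis dvd_mult_cancel_right mult_1)
      then show False using \<open>prime p\<close> not_prime_unit by blast
    qed
  qed
qed

lemma exists_kernel_vector_mod_prime:
  fixes B :: "int^'n^'n"
  assumes "det B \<noteq> 0" and "\<bar>det B\<bar> \<noteq> 1"
  obtains p i u w where "prime p" "u $ i = 1" "B *v u = p *s w"
proof -
  obtain q a where "q dvd det B" and Ba: "\<And>c. B *v a c = q *s axis c 1"
    and primitive: "\<And>p. prime p \<Longrightarrow> \<exists>c r. \<not> p dvd a c $ r"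
    using exists_primitive_adjugate_columns[OF assms(1)] by blast
  have "\<not> is_unit q"
    using det_dvd_one_if_solves_scaled_axes[of B a q] Ba assms(2) by auto
  moreover have "q \<noteq> 0" using \<open>q dvd det B\<close> assms(1) by auto
  ultimately obtain p where "prime p" "p dvd q"
    using prime_divisor_exists by blast
  then obtain q' where q': "q = p * q'" by (elim dvdE)
  obtain c i where "\<not> p dvd a c $ i"
    using primitive[OF \<open>prime p\<close>] by blast
  then have "coprime (a c $ i) p"
    using \<open>prime p\<close> by (simp add: prime_imp_coprime coprime_commute)
  then obtain s t where st: "s * a c $ i + t * p = 1"
    using bezout_int[of "a c $ i" p] by (auto simp: coprime_iff_gcd_eq_1)
  define u where "u = s *s a c + (t * p) *s axis i 1"
  have "u $ i = 1" using st by (simp add: u_def axis_def)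
  moreover have "B *v u = p *s ((s * q') *s axis c 1 + t *s (B *v axis i 1))"
    by (simp add: u_def Ba q' matrix_vector_right_distrib matrix_vector_mult_smult_right
        mult_ac)
  ultimately show thesis using \<open>prime p\<close> that by blast
qed

lemma lattice_cong_eq_UNIV_if_unimodular:
  fixes B :: "int^'n^'n"
  assumes "\<bar>det B\<bar> = 1"
  shows "lattice_cong B = UNIV"
proof -
  have "det B * det B = 1" using assms by (metis abs_mult_self_eq mult.right_neutral)
  then have "x - y = B *v (det B *s adjugate_mult B (x - y))" for x y
    using assms by (simp add: matrix_vector_mult_smult_right matrix_adjugate_mult)
  then show ?thesis by (auto simp: lattice_cong_def)
qed

theorem card_quotient_lattice_cong:
  fixes B :: "int^'n^'n"
  assumes "det B \<noteq> 0"
  shows "finite (UNIV // lattice_cong B) \<and> card (UNIV // lattice_cong B) = nat \<bar>det B\<bar>"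
  using assms
proof (induction "nat \<bar>det B\<bar>" arbitrary: B rule: less_induct)
  case less
  show ?case
  proof (cases "\<bar>det B\<bar> = 1")
    case True
    then have "UNIV // lattice_cong B = {UNIV}"
      by (auto simp: lattice_cong_eq_UNIV_if_unimodular quotient_def)
    then show ?thesis using True by simp
  next
    case False
    obtain p i u w where "prime p" "u $ i = 1" and Bu: "B *v u = p *s w"
      using exists_kernel_vector_mod_prime[OF less.prems False] .
    let ?B' = "replace_col B i w"
    have det: "det B = p * det ?B'"
      using det_replace_col_div[OF \<open>u $ i = 1\<close> Bu[symmetric]] .
    have "p > 1" using \<open>prime p\<close> by (simp add: prime_gt_1_int)
    have "det ?B' \<noteq> 0" using det less.prems by auto
    have split: "nat \<bar>det B\<bar> = nat p * nat \<bar>det ?B'\<bar>"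
      using det \<open>p > 1\<close> by (simp add: abs_mult nat_mult_distrib)
    then have "nat \<bar>det ?B'\<bar> < nat \<bar>det B\<bar>"
      using \<open>p > 1\<close> \<open>det ?B' \<noteq> 0\<close> by simp
    then have IH: "finite (UNIV // lattice_cong ?B')" "card (UNIV // lattice_cong ?B') = nat \<bar>det ?B'\<bar>"
      using less.hyps \<open>det ?B' \<noteq> 0\<close> by blast+
    note index = card_quotient_sublattice[OF _ \<open>det ?B' \<noteq> 0\<close> IH(1)
        lattice_cong_replace_col[OF \<open>u $ i = 1\<close> Bu[symmetric]]]
    show ?thesis
      using index \<open>p > 1\<close> IH(2) split by simp
  qed
qed

section \<open>Orbits of the reflection\<close>

definition reflect :: "'a::ab_group_add^'n \<Rightarrow> 'a^'n \<Rightarrow> 'a^'n" where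
  "reflect b x = - x - b"

lemma reflect_reflect [simp]: "reflect b (reflect b x) = x"
  by (simp add: reflect_def)

lemma reflect_lattice_cong:
  assumes "(x, y) \<in> lattice_cong B"
  shows "(reflect b x, reflect b y) \<in> lattice_cong B"
proof -
  obtain z where "x - y = B *v z"
    using assms by (auto simp: lattice_cong_def)
  moreover have "reflect b x - reflect b y = - (x - y)"
    by (simp add: reflect_def)
  ultimately have "reflect b x - reflect b y = B *v (- z)"
    by (simp add: matrix_vector_mult_uminus_right)
  then show ?thesis by (auto simp: lattice_cong_def)
qed

lemma reflect_lattice_cong_swap:
  assumes "(reflect b x, y) \<in> lattice_cong B"
  shows "(reflect b y, x) \<in> lattice_cong B"
  using lattice_cong_sym[OF reflect_lattice_cong[OF assms, of b]] by simp

lemma sim_rel_iff: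
  "(x, y) \<in> sim_rel B b \<longleftrightarrow> (x, y) \<in> lattice_cong B \<or> (reflect b x, y) \<in> lattice_cong B"
proof -
  have eq: "reflect b x - y = - (x + y + b)"
    by (simp add: reflect_def)
  have "x + y + b = B *v z \<longleftrightarrow> reflect b x - y = B *v (- z)" for z
    by (simp only: eq matrix_vector_mult_uminus_right neg_equal_iff_equal)
  then have "(\<exists>z. x + y + b = B *v z) \<longleftrightarrow> (\<exists>z. reflect b x - y = B *v z)"
    by (metis minus_minus)
  then show ?thesis
    by (auto simp: sim_rel_def lattice_cong_def)
qed

lemma lattice_cong_subset_sim_rel: "lattice_cong B \<subseteq> sim_rel B b"
  by (auto simp: sim_rel_iff)

lemma equiv_sim_rel: "equiv UNIV (sim_rel B b)"
proof (rule equivI)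
  let ?L = "lattice_cong B" and ?S = "sim_rel B b"
  show "refl ?S"
    using lattice_cong_subset_sim_rel[of B b] equiv_lattice_cong[of B]
    by (auto simp: refl_on_def equiv_def)
  show "sym ?S"
  proof (rule symI)
    fix x y assume "(x, y) \<in> ?S"
    then show "(y, x) \<in> ?S"
      unfolding sim_rel_iff using lattice_cong_sym reflect_lattice_cong_swap by blast
  qed
  show "trans ?S"
  proof (rule transI)
    fix x y w assume "(x, y) \<in> ?S" "(y, w) \<in> ?S"
    then consider "(x, y) \<in> ?L" "(y, w) \<in> ?L" | "(x, y) \<in> ?L" "(reflect b y, w) \<in> ?L"
      | "(reflect b x, y) \<in> ?L" "(y, w) \<in> ?L" | "(reflect b x, y) \<in> ?L" "(reflect b y, w) \<in> ?L"
      unfolding sim_rel_iff by blast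
    then have "(x, w) \<in> ?L \<or> (reflect b x, w) \<in> ?L"
    proof cases
      case 1
      then show ?thesis using lattice_cong_trans by blast
    next
      case 2
      then have "(reflect b x, reflect b y) \<in> ?L" by (blast intro: reflect_lattice_cong)
      then show ?thesis using 2 lattice_cong_trans by blast
    next
      case 3
      then show ?thesis using lattice_cong_trans by blast
    next
      case 4
      then have "(x, reflect b y) \<in> ?L" using reflect_lattice_cong_swap lattice_cong_sym by blast
      then show ?thesis using 4 lattice_cong_trans by blast
    qed
    then show "(x, w) \<in> ?S" by (simp add: sim_rel_iff)
  qed
qed simp

definition reflection_fixed_classes :: "int^'n^'n \<Rightarrow> int^'n \<Rightarrow> (int^'n) set set" where
  "reflection_fixed_classes B b = {lattice_cong B `` {x} | x. (x, reflect b x) \<in> lattice_cong B}"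

lemma lattice_class_in_fixed_classes_iff:
  "lattice_cong B `` {x} \<in> reflection_fixed_classes B b \<longleftrightarrow> (x, reflect b x) \<in> lattice_cong B"
proof
  assume "lattice_cong B `` {x} \<in> reflection_fixed_classes B b"
  then obtain x' where "lattice_cong B `` {x} = lattice_cong B `` {x'}"
    and fixed: "(x', reflect b x') \<in> lattice_cong B"
    by (auto simp: reflection_fixed_classes_def)
  then have "(x, x') \<in> lattice_cong B"
    using eq_equiv_class_iff[OF equiv_lattice_cong] by blast
  moreover from this have "(reflect b x', reflect b x) \<in> lattice_cong B"
    using reflect_lattice_cong lattice_cong_sym by blast
  ultimately show "(x, reflect b x) \<in> lattice_cong B"
    using fixed lattice_cong_trans by blast
qed (auto simp: reflection_fixed_classes_def)

lemma sim_rel_fiber: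
  "{X \<in> UNIV // lattice_cong B. sim_rel B b `` X = sim_rel B b `` {x}}
     = {lattice_cong B `` {x}, lattice_cong B `` {reflect b x}}"
proof -
  let ?L = "lattice_cong B" and ?S = "sim_rel B b"
  have class_eq: "?S `` (?L `` {y}) = ?S `` {y}" for y
    using refines_equiv_class_eq2[OF lattice_cong_subset_sim_rel equiv_lattice_cong equiv_sim_rel] .
  have iff: "?S `` {x} = ?S `` {y} \<longleftrightarrow> ?L `` {x} = ?L `` {y} \<or> ?L `` {reflect b x} = ?L `` {y}" for y
    by (simp add: eq_equiv_class_iff[OF equiv_sim_rel] eq_equiv_class_iff[OF equiv_lattice_cong]
        sim_rel_iff)
  show ?thesis
  proof (intro set_eqI iffI)
    fix X assume "X \<in> {X \<in> UNIV // ?L. ?S `` X = ?S `` {x}}"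
    then obtain y where "X = ?L `` {y}" and "?S `` {x} = ?S `` {y}"
      by (auto simp: class_eq elim!: quotientE)
    then show "X \<in> {?L `` {x}, ?L `` {reflect b x}}" using iff by auto
  next
    fix X assume "X \<in> {?L `` {x}, ?L `` {reflect b x}}"
    then obtain y where "X = ?L `` {y}" and "?S `` {x} = ?S `` {y}"
      using iff by auto
    then show "X \<in> {X \<in> UNIV // ?L. ?S `` X = ?S `` {x}}"
      by (auto simp: class_eq intro: quotientI)
  qed
qed

lemma card_quotient_sim_rel:
  assumes "finite (UNIV // lattice_cong B)"
  shows "finite (UNIV // sim_rel B b)"
    and "card (UNIV // lattice_cong B) + card (reflection_fixed_classes B b)
      = 2 * card (UNIV // sim_rel B b)"
proof -
  let ?L = "lattice_cong B" and ?S = "sim_rel B b" and ?Fix = "reflection_fixed_classes B b"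
  show fin: "finite (UNIV // ?S)"
    using finite_refines_finite[OF assms lattice_cong_subset_sim_rel equiv_lattice_cong equiv_sim_rel] .
  have Fix_sub: "?Fix \<subseteq> UNIV // ?L"
    by (auto simp: reflection_fixed_classes_def intro: quotientI)
  have fibers: "finite {X \<in> UNIV // ?L. ?S `` X = Q}" for Q
    by (rule finite_subset[OF _ assms]) blast
  note refines = card_refines_sum(2)[OF lattice_cong_subset_sim_rel equiv_lattice_cong equiv_sim_rel fin
      fibers]
  have two: "card {X \<in> UNIV // ?L. ?S `` X = Q} + card {X \<in> ?Fix. ?S `` X = Q} = 2"
    if Q_class: "Q \<in> UNIV // ?S" for Q
  proof -
    obtain x where Q: "Q = ?S `` {x}" using Q_class by (elim quotientE) blast
    have fiber: "{X \<in> UNIV // ?L. ?S `` X = Q} = {?L `` {x}, ?L `` {reflect b x}}"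
      unfolding Q by (rule sim_rel_fiber)
    have "{X \<in> ?Fix. ?S `` X = Q} = ?Fix \<inter> {X \<in> UNIV // ?L. ?S `` X = Q}"
      using Fix_sub by auto
    then have fixed_fiber: "{X \<in> ?Fix. ?S `` X = Q} = ?Fix \<inter> {?L `` {x}, ?L `` {reflect b x}}"
      by (simp only: fiber)
    show ?thesis
    proof (cases "(x, reflect b x) \<in> ?L")
      case True
      then have "?L `` {x} = ?L `` {reflect b x}"
        by (rule equiv_class_eq[OF equiv_lattice_cong])
      moreover have "?L `` {x} \<in> ?Fix"
        using True by (simp add: lattice_class_in_fixed_classes_iff)
      ultimately show ?thesis
        unfolding fixed_fiber fiber by simp
    next
      case False
      then have "?L `` {x} \<noteq> ?L `` {reflect b x}"
        by (simp add: eq_equiv_class_iff[OF equiv_lattice_cong])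
      moreover have "?L `` {x} \<notin> ?Fix"
        using False by (simp add: lattice_class_in_fixed_classes_iff)
      moreover have "?L `` {reflect b x} \<notin> ?Fix"
        using False lattice_cong_sym by (auto simp: lattice_class_in_fixed_classes_iff)
      ultimately show ?thesis
        unfolding fixed_fiber fiber by simp
    qed
  qed
  have "card (UNIV // ?L) + card ?Fix = (\<Sum>Q\<in>UNIV // ?S. 2)"
    unfolding refines[OF order_refl] refines[OF Fix_sub] sum.distrib[symmetric]
    using two by (rule sum.cong[OF refl])
  then show "card (UNIV // ?L) + card ?Fix = 2 * card (UNIV // ?S)"
    by simp
qed

section \<open>Fixed classes and solutions modulo 2\<close>

lemma of_int_bit_eq_0_iff: "(of_int k :: bit) = 0 \<longleftrightarrow> even k"
proof -
  have "(of_int k :: bit) = of_int 2 * of_int (k div 2) + of_int (k mod 2)"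
    by (metis of_int_add of_int_mult div_mult_mod_eq mult.commute)
  also have "\<dots> = of_int (k mod 2)" by simp
  finally show ?thesis
    by (cases "even k") (auto simp: even_iff_mod_2_eq_zero odd_iff_mod_2_eq_one)
qed

definition bit_lift :: "bit^'n \<Rightarrow> int^'n" where
  "bit_lift y = (\<chi> k. if y $ k = 0 then 0 else 1)"

definition vec_half :: "int^'n \<Rightarrow> int^'n" where
  "vec_half v = (\<chi> k. v $ k div 2)"

lemma vec_mod2_mult: "vec_mod2 (A *v v) = mat_mod2 A *v vec_mod2 v"
  by (simp add: vec_eq_iff vec_mod2_def mat_mod2_def matrix_vector_mult_def)

lemma vec_mod2_add: "vec_mod2 (u + v) = vec_mod2 u + vec_mod2 v"
  by (simp add: vec_eq_iff vec_mod2_def)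

lemma vec_mod2_diff: "vec_mod2 (u - v) = vec_mod2 u - vec_mod2 v"
  by (simp add: vec_eq_iff vec_mod2_def)

lemma vec_mod2_bit_lift: "vec_mod2 (bit_lift y) = y"
proof -
  have "(if y $ k = 0 then 0 else 1 :: bit) = y $ k" for k
    by (cases "y $ k") auto
  then show ?thesis by (simp add: vec_eq_iff vec_mod2_def bit_lift_def)
qed

lemma vec_mod2_eq_0_iff: "vec_mod2 v = 0 \<longleftrightarrow> 2 *s vec_half v = v"
proof -
  have "even k \<longleftrightarrow> 2 * (k div 2) = k" for k :: int
    by (metis dvd_mult_div_cancel dvd_triv_left)
  then show ?thesis
    by (simp add: vec_eq_iff vec_mod2_def vec_half_def of_int_bit_eq_0_iff)
qed

lemma vec_half_double: "vec_half (2 *s v) = v"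
  by (simp add: vec_eq_iff vec_half_def)

lemma vec_mod2_double: "vec_mod2 (2 *s v) = 0"
  by (simp add: vec_mod2_eq_0_iff vec_half_double)

lemma bit_lift_vec_mod2_add_double_half: "bit_lift (vec_mod2 z) + 2 *s vec_half z = z"
proof -
  have "(if even k then 0 else 1) = k mod 2" for k :: int
    by (simp add: even_iff_mod_2_eq_zero odd_iff_mod_2_eq_one)
  then show ?thesis
    by (simp add: vec_eq_iff bit_lift_def vec_mod2_def vec_half_def of_int_bit_eq_0_iff mod_mult_div_eq)
qed

lemma lattice_cong_reflect_iff:
  "(x, reflect b x) \<in> lattice_cong B \<longleftrightarrow> (\<exists>z. 2 *s x + b = B *v z)"
proof -
  have "x - reflect b x = 2 *s x + b"
    by (simp add: reflect_def vec_eq_iff mult_2)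
  then show ?thesis by (simp add: lattice_cong_def)
qed

lemma card_reflection_fixed_classes:
  fixes B :: "int^'n^'n"
  assumes "det B \<noteq> 0"
  shows "card (reflection_fixed_classes B b) = O_count B b"
proof -
  let ?L = "lattice_cong B"
  define sols where "sols = {y :: bit^'n. mat_mod2 B *v y = vec_mod2 b}"
  define center where "center y = vec_half (B *v bit_lift y - b)" for y
  have center: "2 *s center y + b = B *v bit_lift y" if "y \<in> sols" for y
  proof -
    have "vec_mod2 (B *v bit_lift y - b) = 0"
      using that by (simp add: sols_def vec_mod2_diff vec_mod2_mult vec_mod2_bit_lift)
    then show ?thesis
      unfolding center_def vec_mod2_eq_0_iff by simp
  qed
  have inj: "inj_on (\<lambda>y. ?L `` {center y}) sols"
  proof
    fix y1 y2 assume y: "y1 \<in> sols" "y2 \<in> sols" and "?L `` {center y1} = ?L `` {center y2}"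
    then have "(center y1, center y2) \<in> ?L"
      by (simp add: eq_equiv_class_iff[OF equiv_lattice_cong])
    then obtain z where z: "center y1 - center y2 = B *v z"
      by (auto simp: lattice_cong_def)
    have "B *v (bit_lift y1 - bit_lift y2) = (2 *s center y1 + b) - (2 *s center y2 + b)"
      by (simp add: matrix_vector_mult_diff_distrib center y)
    also have "\<dots> = 2 *s (center y1 - center y2)"
      by (simp add: vector_ssub_ldistrib)
    also have "\<dots> = B *v (2 *s z)"
      by (simp add: z matrix_vector_mult_smult_right)
    finally have "bit_lift y1 - bit_lift y2 = 2 *s z"
      by (rule matrix_vector_mult_inj[OF assms])
    then have "vec_mod2 (bit_lift y1 - bit_lift y2) = 0"
      by (simp add: vec_mod2_eq_0_iff vec_half_double)
    then show "y1 = y2"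
      by (simp add: vec_mod2_diff vec_mod2_bit_lift)
  qed
  have "(\<lambda>y. ?L `` {center y}) ` sols = reflection_fixed_classes B b"
  proof (intro set_eqI iffI)
    fix X assume "X \<in> (\<lambda>y. ?L `` {center y}) ` sols"
    then obtain y where "y \<in> sols" and X: "X = ?L `` {center y}" by blast
    then have "(center y, reflect b (center y)) \<in> ?L"
      using center by (auto simp: lattice_cong_reflect_iff)
    then show "X \<in> reflection_fixed_classes B b"
      unfolding X by (simp add: lattice_class_in_fixed_classes_iff)
  next
    fix X assume "X \<in> reflection_fixed_classes B b"
    then obtain x z where X: "X = ?L `` {x}" and z: "2 *s x + b = B *v z"
      by (auto simp: reflection_fixed_classes_def lattice_cong_reflect_iff)
    define y where "y = vec_mod2 z"
    have "y \<in> sols"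
      unfolding sols_def y_def
      by (simp add: vec_mod2_add vec_mod2_double flip: vec_mod2_mult z)
    have double: "B *v bit_lift y - b = 2 *s (x - B *v vec_half z)"
    proof -
      have "bit_lift y = z - 2 *s vec_half z"
        using bit_lift_vec_mod2_add_double_half[of z] unfolding y_def by (simp add: eq_diff_eq)
      then have "B *v bit_lift y = B *v z - 2 *s (B *v vec_half z)"
        by (simp add: matrix_vector_mult_diff_distrib matrix_vector_mult_smult_right)
      then show ?thesis
        by (simp add: vector_ssub_ldistrib flip: z)
    qed
    have "center y = x - B *v vec_half z"
      unfolding center_def double by (rule vec_half_double)
    then have "(x, center y) \<in> ?L"
      by (auto simp: lattice_cong_def)
    then have "X = ?L `` {center y}"
      unfolding X by (rule equiv_class_eq[OF equiv_lattice_cong])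
    then show "X \<in> (\<lambda>y. ?L `` {center y}) ` sols"
      using \<open>y \<in> sols\<close> by blast
  qed
  then show ?thesis
    using card_image[OF inj] by (simp add: O_count_def sols_def)
qed

section \<open>Singular matrices\<close>

lemma exists_functional_vanishing_on_lattice:
  fixes B :: "int^'n^'n"
  assumes "det B = 0"
  obtains c :: "real^'n" where "c \<noteq> 0" "\<And>z. c \<bullet> real_vec (B *v z) = 0"
proof -
  let ?A = "transpose (real_mat B)"
  have "det ?A = 0" using assms by (simp add: det_transpose det_real_mat)
  then have "\<not> inj ((*v) ?A)"
    using det_nz_iff_inj[of "(*v) ?A"] by simp
  then obtain c where "c \<noteq> 0" "?A *v c = 0"
    using linear_injective_0[of "(*v) ?A"] by auto
  moreover have "c \<bullet> real_vec (B *v z) = (?A *v c) \<bullet> real_vec z" for z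
    by (simp add: dot_lmul_matrix flip: real_mat_mult_real_vec)
  ultimately show thesis using that by simp
qed

lemma infinite_quotient_sim_rel:
  fixes B :: "int^'n^'n"
  assumes "det B = 0"
  shows "infinite (UNIV // sim_rel B b)"
proof
  assume finite: "finite (UNIV // sim_rel B b)"
  obtain c where "c \<noteq> 0" and c: "\<And>z. c \<bullet> real_vec (B *v z) = 0"
    using exists_functional_vanishing_on_lattice[OF assms] by blast
  then obtain i where "c $ i \<noteq> 0" by (auto simp: vec_eq_iff)
  define g where "g x = c \<bullet> real_vec x" for x
  define point where "point m = int m *s axis i 1" for m
  have g_point: "g (point m) = c $ i * real m" for m
    by (simp add: g_def point_def inner_vec_def axis_def if_distrib cong: if_cong)
  have "inj (\<lambda>m. g (point m))"
    using \<open>c $ i \<noteq> 0\<close> by (auto simp: inj_on_def g_point)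
  have g_class: "g y \<in> {g x, - g x - g b}" if "(x, y) \<in> sim_rel B b" for x y
  proof -
    have "g (x - y) = 0 \<or> g (reflect b x - y) = 0"
      using that c by (auto simp: sim_rel_iff lattice_cong_def g_def)
    then show ?thesis
      by (auto simp: g_def reflect_def real_vec_uminus real_vec_diff inner_diff_right)
  qed
  define f where "f m = sim_rel B b `` {point m}" for m
  have "finite (range f)"
    using finite by (rule finite_subset[rotated]) (auto simp: f_def intro: quotientI)
  then obtain m0 where infinite_fiber: "infinite {m. f m = f m0}"
    using pigeonhole_infinite[of "UNIV :: nat set" f] by auto
  have "{m. f m = f m0} \<subseteq> (\<lambda>m. g (point m)) -` {g (point m0), - g (point m0) - g b}"
  proof
    fix m assume "m \<in> {m. f m = f m0}"
    then have "f m0 = f m" by simp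
    then have "(point m0, point m) \<in> sim_rel B b"
      by (simp add: f_def eq_equiv_class_iff[OF equiv_sim_rel])
    then show "m \<in> (\<lambda>m. g (point m)) -` {g (point m0), - g (point m0) - g b}"
      using g_class by simp
  qed
  moreover have "finite ((\<lambda>m. g (point m)) -` {g (point m0), - g (point m0) - g b})"
    using \<open>inj (\<lambda>m. g (point m))\<close> by (simp add: finite_vimageI)
  ultimately show False
    using infinite_fiber finite_subset by auto
qed

theorem lemma5p10:
  fixes B :: "int^'n^'n" and b :: "int^'n"
  shows "equiv UNIV (sim_rel B b) \<and>
         (det B = 0 \<longrightarrow> infinite (UNIV // sim_rel B b)) \<and>
         (det B \<noteq> 0 \<longrightarrow> finite (UNIV // sim_rel B b) \<and>
            real (card (UNIV // sim_rel B b)) = (real_of_int \<bar>det B\<bar> + real (O_count B b)) / 2)"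
proof (intro conjI impI)
  show "equiv UNIV (sim_rel B b)" by (rule equiv_sim_rel)
  show "det B = 0 \<Longrightarrow> infinite (UNIV // sim_rel B b)" by (rule infinite_quotient_sim_rel)
  assume "det B \<noteq> 0"
  then have "finite (UNIV // lattice_cong B)" and index: "card (UNIV // lattice_cong B) = nat \<bar>det B\<bar>"
    using card_quotient_lattice_cong by blast+
  then show "finite (UNIV // sim_rel B b)"
    using card_quotient_sim_rel(1) by blast
  have "nat \<bar>det B\<bar> + O_count B b = 2 * card (UNIV // sim_rel B b)"
    using card_quotient_sim_rel(2)[OF \<open>finite (UNIV // lattice_cong B)\<close>, of b]
    by (simp add: index card_reflection_fixed_classes[OF \<open>det B \<noteq> 0\<close>])
  then have "real_of_int \<bar>det B\<bar> + real (O_count B b) = 2 * real (card (UNIV // sim_rel B b))"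
    by (metis of_nat_add of_nat_mult of_nat_numeral of_nat_nat abs_ge_zero)
  then show "real (card (UNIV // sim_rel B b)) = (real_of_int \<bar>det B\<bar> + real (O_count B b)) / 2"
    by simp
qed

end
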